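(* Let $M$ be a compact complex manifold of complex dimension $n$. For all $p,q$ with $0\le p,q\le n$: (1) $b^{p,q}=\tilde b^{p,q}+a^{p,q}$, $d^{p,q}=\tilde d^{p,q}+a^{p,q}$, $c^{p,q}=\tilde c^{p,q}+f^{p,q}$, $e^{p,q}=\tilde e^{p,q}+f^{p,q}$; (2) $b^{p,q}\le h^{p,q}_{\partial\bar\partial}$, $d^{p,q}\le h^{p,q}_{\partial\bar\partial}$, $c^{p,q}\le h^{p,q}_{\partial+\bar\partial}$, $e^{p,q}\le h^{p,q}_{\partial+\bar\partial}$; (3) $h^{p,q}_{\partial+\bar\partial}+\tilde b^{p,q}=h^{p,q}_{\bar\partial}+c^{p,q}$, $h^{p,q}_{\partial+\bar\partial}+\tilde d^{p,q}=h^{p,q}_{\partial}+e^{p,q}$, $h^{p,q}_{\partial\bar\partial}+\tilde e^{p,q}=h^{p,q}_{\bar\partial}+d^{p,q}$, $h^{p,q}_{\partial\bar\partial}+\tilde c^{p,q}=h^{p,q}_{\partial}+b^{p,q}$; (4) $h^{p,q}_{\partial+\bar\partial}+h^{p,q}_{\partial\bar\partial}=h^{p,q}_{\partial}+h^{p,q}_{\bar\partial}+a^{p,q}+f^{p,q}$; (5) $h^{0,q}_{\bar\partial}\le h^{0,q}_{\partial+\bar\partial}$, $h^{0,q}_{\partial\bar\partial}\le h^{0,q}_{\partial}$, $h^{p,0}_{\partial\bar\partial}\le h^{p,0}_{\bar\partial}$, $h^{p,0}_{\partial}\le h^{p,0}_{\partial+\bar\partial}$; (6) $h^{p,n}_{\partial}\le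 h^{p,n}_{\partial\bar\partial}$, $h^{p,n}_{\partial+\bar\partial}\le h^{p,n}_{\bar\partial}$, $h^{n,q}_{\bar\partial}\le h^{n,q}_{\partial\bar\partial}$, $h^{n,q}_{\partial+\bar\partial}\le h^{n,q}_{\partial}$.
   Context: Let $M$ be a compact complex manifold of complex dimension $n$ and $\mathcal{E}^{p,q}(M)$ the space of smooth complex $(p,q)$-forms. In bidegree $(p,q)$, $\ker\partial,\ker\bar\partial,\ker\partial\bar\partial$ denote the kernels of $\partial,\bar\partial,\partial\bar\partial$ on $\mathcal{E}^{p,q}(M)$, and $\mathrm{Im}\,\partial=\partial\mathcal{E}^{p-1,q}(M)$, $\mathrm{Im}\,\bar\partial=\bar\partial\mathcal{E}^{p,q-1}(M)$, $\mathrm{Im}\,\partial\bar\partial=\partial\bar\partial\mathcal{E}^{p-1,q-1}(M)$ (zero if an index is negative). Define, all in bidegree $(p,q)$: $H^{p,q}_{\bar\partial}=\ker\bar\partial/\mathrm{Im}\,\bar\partial$, $H^{p,q}_{\partial}=\ker\partial/\mathrm{Im}\,\partial$, $H^{p,q}_{\partial\bar\partial}=(\ker\partial\cap\ker\bar\partial)/\mathrm{Im}\,\partial\bar\partial$ (Bott–Chern), $H^{p,q}_{\partial+\bar\partial}=\ker\partial\bar\partial/(\mathrm{Im}\,\partial+\mathrm{Im}\,\bar\partial)$ (Aeppli), and $A^{p,q}=(\mathrm{Im}\,\partial\cap\mathrm{Im}\,\bar\partial)/\mathrm{Im}\,\partial\bar\partial$, $B^{p,q}=(\mathrm{Im}\,\partial\cap\ker\bar\partial)/\mathrm{Im}\,\partial\bar\partial$,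 $C^{p,q}=\ker\partial\bar\partial/(\mathrm{Im}\,\partial+\ker\bar\partial)$, $D^{p,q}=(\ker\partial\cap\mathrm{Im}\,\bar\partial)/\mathrm{Im}\,\partial\bar\partial$, $E^{p,q}=\ker\partial\bar\partial/(\ker\partial+\mathrm{Im}\,\bar\partial)$, $F^{p,q}=\ker\partial\bar\partial/(\ker\partial+\ker\bar\partial)$, $\tilde B^{p,q}=(\mathrm{Im}\,\partial\cap\ker\bar\partial)/(\mathrm{Im}\,\partial\cap\mathrm{Im}\,\bar\partial)$, $\tilde D^{p,q}=(\ker\partial\cap\mathrm{Im}\,\bar\partial)/(\mathrm{Im}\,\partial\cap\mathrm{Im}\,\bar\partial)$, $\tilde C^{p,q}=(\ker\partial+\ker\bar\partial)/(\mathrm{Im}\,\partial+\ker\bar\partial)$, $\tilde E^{p,q}=(\ker\partial+\ker\bar\partial)/(\ker\partial+\mathrm{Im}\,\bar\partial)$. All are finite-dimensional; lowercase letters denote complex dimensions, e.g. $a^{p,q}=\dim A^{p,q}$, $\tilde b^{p,q}=\dim\tilde B^{p,q}$, $h^{p,q}_{\partial+\bar\partial}=\dim H^{p,q}_{\partial+\bar\partial}$. *)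

theory Defs
  imports Complex_Main
begin

text \<open>The smooth forms of a compact complex manifold of dimension n form a
bounded double complex of complex vector spaces E p q (0 \<le> p,q \<le> n) with differentials
d (= partial, bidegree (1,0)) and db (= dbar, bidegree (0,1)) satisfying d d = 0, db db = 0,
d db + db d = 0. All E p q live inside one ambient complex vector space of type 'v.\<close>

definition ssum :: "'v::ab_group_add set \<Rightarrow> 'v set \<Rightarrow> 'v set" where
  "ssum A B = {a + b | a b. a \<in> A \<and> b \<in> B}"

text \<open>A complement of B inside A (a subspace C with C + B = A and C \<inter> B = 0); it is
isomorphic to the quotient space A/B.\<close>
definition is_compl :: "(complex \<Rightarrow> 'v::ab_group_add \<Rightarrow> 'v) \<Rightarrow> 'v set \<Rightarrow> 'v set \<Rightarrow> 'v set \<Rightarrow> bool" where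
  "is_compl scale A B C \<longleftrightarrow> module.subspace scale C \<and> C \<subseteq> A \<and> C \<inter> B = {0} \<and> ssum C B = A"

definition qdim :: "(complex \<Rightarrow> 'v::ab_group_add \<Rightarrow> 'v) \<Rightarrow> 'v set \<Rightarrow> 'v set \<Rightarrow> nat" where
  "qdim scale A B = vector_space.dim scale (SOME C. is_compl scale A B C)"

definition qfin :: "(complex \<Rightarrow> 'v::ab_group_add \<Rightarrow> 'v) \<Rightarrow> 'v set \<Rightarrow> 'v set \<Rightarrow> bool" where
  "qfin scale A B \<longleftrightarrow> (\<exists>C S. is_compl scale A B C \<and> finite S \<and> module.span scale S = C)"

definition bdcx :: "(complex \<Rightarrow> 'v::ab_group_add \<Rightarrow> 'v) \<Rightarrow> (nat \<Rightarrow> nat \<Rightarrow> 'v set)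
    \<Rightarrow> ('v \<Rightarrow> 'v) \<Rightarrow> ('v \<Rightarrow> 'v) \<Rightarrow> nat \<Rightarrow> bool" where
  "bdcx scale E d db n \<longleftrightarrow>
     vector_space scale \<and> Vector_Spaces.linear scale scale d \<and> Vector_Spaces.linear scale scale db \<and>
     (\<forall>p q. module.subspace scale (E p q)) \<and>
     (\<forall>p q. n < p \<or> n < q \<longrightarrow> E p q = {0}) \<and>
     (\<forall>p q x. x \<in> E p q \<longrightarrow> d x \<in> E (Suc p) q \<and> db x \<in> E p (Suc q) \<and>
        d (d x) = 0 \<and> db (db x) = 0 \<and> d (db x) + db (d x) = 0)"

text \<open>Kernels and images in bidegree (p,q); images are 0 when an index would be negative.\<close>
definition kerD where "kerD E d p q = {x \<in> E p q. d x = 0}"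
definition kerDb where "kerDb E db p q = {x \<in> E p q. db x = 0}"
definition kerDDb where "kerDDb E d db p q = {x \<in> E p q. d (db x) = 0}"
definition imD where "imD E d p q = (if p = 0 then {0} else d ` E (p - 1) q)"
definition imDb where "imDb E db p q = (if q = 0 then {0} else db ` E p (q - 1))"
definition imDDb where
  "imDDb E d db p q = (if p = 0 \<or> q = 0 then {0} else (\<lambda>x. d (db x)) ` E (p - 1) (q - 1))"

text \<open>The fourteen quotients, as pairs (numerator, denominator), in bidegree (p,q).\<close>
definition H_db where "H_db E d db p q = (kerDb E db p q, imDb E db p q)"
definition H_d where "H_d E d db p q = (kerD E d p q, imD E d p q)"
definition H_BC where "H_BC E d db p q = (kerD E d p q \<inter> kerDb E db p q, imDDb E d db p q)"
definition H_A where "H_A E d db p q = (kerDDb E d db p q, ssum (imD E d p q) (imDb E db p q))"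
definition Aq where "Aq E d db p q = (imD E d p q \<inter> imDb E db p q, imDDb E d db p q)"
definition Bq where "Bq E d db p q = (imD E d p q \<inter> kerDb E db p q, imDDb E d db p q)"
definition Cq where "Cq E d db p q = (kerDDb E d db p q, ssum (imD E d p q) (kerDb E db p q))"
definition Dq where "Dq E d db p q = (kerD E d p q \<inter> imDb E db p q, imDDb E d db p q)"
definition Eq where "Eq E d db p q = (kerDDb E d db p q, ssum (kerD E d p q) (imDb E db p q))"
definition Fq where "Fq E d db p q = (kerDDb E d db p q, ssum (kerD E d p q) (kerDb E db p q))"
definition Bt where "Bt E d db p q = (imD E d p q \<inter> kerDb E db p q, imD E d p q \<inter> imDb E db p q)"
definition Dt where "Dt E d db p q = (kerD E d p q \<inter> imDb E db p q, imD E d p q \<inter> imDb E db p q)"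
definition Ct where "Ct E d db p q = (ssum (kerD E d p q) (kerDb E db p q), ssum (imD E d p q) (kerDb E db p q))"
definition Et where "Et E d db p q = (ssum (kerD E d p q) (kerDb E db p q), ssum (kerD E d p q) (imDb E db p q))"

definition qd :: "(complex \<Rightarrow> 'v::ab_group_add \<Rightarrow> 'v) \<Rightarrow> 'v set \<times> 'v set \<Rightarrow> nat" where
  "qd scale X = qdim scale (fst X) (snd X)"

definition qf :: "(complex \<Rightarrow> 'v::ab_group_add \<Rightarrow> 'v) \<Rightarrow> 'v set \<times> 'v set \<Rightarrow> bool" where
  "qf scale X = qfin scale (fst X) (snd X)"

text \<open>Standing assumption of the paper: all fourteen quotients are finite-dimensional.\<close>
definition all_fin where
  "all_fin scale E d db \<longleftrightarrow> (\<forall>p q. \<forall>Q \<in> {H_db, H_d, H_BC, H_A, Aq, Bq, Cq, Dq, Eq, Fq, Bt, Dt, Ct, Et}.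
      qf scale (Q E d db p q))"

end

theory Submission
  imports Defs
begin

text \<open>All fourteen numbers are dimensions of quotients built from six subspaces of
  E^{p,q}: ker \<partial>, ker \<partial>bar, ker \<partial>\<partial>bar, im \<partial>, im \<partial>bar, im \<partial>\<partial>bar, which satisfy
  im \<partial>\<partial>bar \<subseteq> im \<partial> \<subseteq> ker \<partial> \<subseteq> ker \<partial>\<partial>bar and the same with \<partial>bar in place of \<partial>.
  Nothing else about the double complex is used. The equalities follow from two facts about
  finite-dimensional quotients: additivity along a chain C \<subseteq> B \<subseteq> A, and, for I \<subseteq> K,
  dim K/I = dim (K + L)/(I + L) + dim (K \<inter> L)/(I \<inter> L), a consequence of the modular law and
  the second isomorphism theorem. The inequalities in extreme bidegrees hold because there an
  image vanishes or a kernel equals ker \<partial>\<partial>bar. Exchanging \<partial> and \<partial>bar turns each statement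
  about B, C into the corresponding one about D, E.\<close>

lemma ssumI: "a \<in> A \<Longrightarrow> b \<in> B \<Longrightarrow> a + b \<in> ssum A B"
  unfolding ssum_def by blast

lemma ssumE:
  assumes "x \<in> ssum A B"
  obtains a b where "a \<in> A" "b \<in> B" "x = a + b"
  using assms unfolding ssum_def by blast

lemma ssum_commute: "ssum A B = ssum B A"
  unfolding ssum_def by (metis (no_types, lifting) add.commute)

lemma ssum_assoc: "ssum (ssum A B) C = ssum A (ssum B C)"
  unfolding ssum_def by (auto simp: add.assoc) (metis add.assoc)+

lemma ssum_zero_left [simp]: "ssum {0} B = B"
  unfolding ssum_def by auto

lemma ssum_mono: "A \<subseteq> A' \<Longrightarrow> B \<subseteq> B' \<Longrightarrow> ssum A B \<subseteq> ssum A' B'"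
  unfolding ssum_def by blast

text \<open>Since qd measures an arbitrarily chosen complement, quotient dimensions are computed
  through bases of complements.\<close>
definition quotient_basis ::
    "(complex \<Rightarrow> 'v::ab_group_add \<Rightarrow> 'v) \<Rightarrow> 'v set \<Rightarrow> 'v set \<Rightarrow> 'v set \<Rightarrow> bool" where
  "quotient_basis scale S A B \<longleftrightarrow> \<not> module.dependent scale S \<and> is_compl scale A B (module.span scale S)"

definition has_qdim ::
    "(complex \<Rightarrow> 'v::ab_group_add \<Rightarrow> 'v) \<Rightarrow> 'v set \<Rightarrow> 'v set \<Rightarrow> nat \<Rightarrow> bool" where
  "has_qdim scale A B k \<longleftrightarrow> (\<exists>S. quotient_basis scale S A B \<and> finite S \<and> card S = k)"

locale complex_vector_space =
  vector_space "scale :: complex \<Rightarrow> 'v::ab_group_add \<Rightarrow> 'v" for scale (infixr \<open>*s\<close> 75)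
begin

lemma subspace_ssum: "subspace A \<Longrightarrow> subspace B \<Longrightarrow> subspace (ssum A B)"
  unfolding ssum_def by (rule subspace_sums)

lemma ssum_least: "subspace C \<Longrightarrow> A \<subseteq> C \<Longrightarrow> B \<subseteq> C \<Longrightarrow> ssum A B \<subseteq> C"
  unfolding ssum_def using subspace_add by blast

lemma ssum_upper_left: "subspace B \<Longrightarrow> A \<subseteq> ssum A B"
  using ssumI[of _ A 0 B] subspace_0[of B] by auto

lemma ssum_upper_right: "subspace A \<Longrightarrow> B \<subseteq> ssum A B"
  using ssum_upper_left[of A B] by (simp add: ssum_commute)

lemma ssum_absorb: "subspace A \<Longrightarrow> subspace B \<Longrightarrow> B \<subseteq> A \<Longrightarrow> ssum A B = A"
  by (meson ssum_least ssum_upper_left subset_refl equalityI)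

lemma span_Un_ssum: "span (S \<union> T) = ssum (span S) (span T)"
  unfolding ssum_def by (rule span_Un)

lemma Int_ssum_modular:
  assumes "subspace X" "subspace B" "B \<subseteq> X"
  shows "X \<inter> ssum B Y = ssum B (X \<inter> Y)"
proof (intro equalityI subsetI)
  fix x assume "x \<in> X \<inter> ssum B Y"
  then obtain b y where x: "x \<in> X" "b \<in> B" "y \<in> Y" "x = b + y" by (auto elim: ssumE)
  have "y = x - b" using x(4) by simp
  then have "y \<in> X" using x assms subspace_diff by blast
  with x show "x \<in> ssum B (X \<inter> Y)" by (auto intro: ssumI)
next
  fix x assume "x \<in> ssum B (X \<inter> Y)"
  then obtain b y where "b \<in> B" "y \<in> X" "y \<in> Y" "x = b + y" by (auto elim: ssumE)
  with assms show "x \<in> X \<inter> ssum B Y" by (auto intro: ssumI subspace_add)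
qed

lemma quotient_basisD:
  assumes "quotient_basis scale S A B"
  shows "independent S" "span S \<subseteq> A" "span S \<inter> B = {0}" "ssum (span S) B = A"
  using assms by (auto simp: quotient_basis_def is_compl_def)

lemma quotient_basisI:
  assumes "independent S" "span S \<inter> B = {0}" "ssum (span S) B = A"
  shows "quotient_basis scale S A B"
proof -
  have "x + 0 \<in> A" if "x \<in> span S" for x
    using that assms(2,3) ssumI[of x "span S" 0 B] by blast
  then show ?thesis using assms by (auto simp: quotient_basis_def is_compl_def)
qed

lemma quotient_basis_subset: "quotient_basis scale S A B \<Longrightarrow> S \<subseteq> A"
  using quotient_basisD(2) span_superset by blast

lemma is_compl_obtain_quotient_basis:
  assumes "is_compl scale A B C"
  obtains S where "quotient_basis scale S A B" "span S = C"
proof -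
  obtain S where S: "S \<subseteq> C" "independent S" "C \<subseteq> span S"
    using maximal_independent_subset[of C] by blast
  have "subspace C" using assms by (simp add: is_compl_def)
  then have "span S = C" using span_subspace[OF S(1,3)] by blast
  with assms S show ?thesis using that by (simp add: quotient_basis_def)
qed

lemma span_Int_of_disjoint:
  assumes "independent U" "S \<subseteq> U" "T \<subseteq> U" "S \<inter> T = {}"
  shows "span S \<inter> span T = {0}"
proof -
  have "x = 0" if x: "x \<in> span S" "x \<in> span T" for x
  proof -
    obtain s r where s: "x = (\<Sum>a\<in>s. r a *s a)" "finite s" "s \<subseteq> S"
      using x(1) unfolding span_explicit by blast
    obtain t r' where t: "x = (\<Sum>a\<in>t. r' a *s a)" "finite t" "t \<subseteq> T"
      using x(2) unfolding span_explicit by blast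
    have disj: "s \<inter> t = {}" using s(3) t(3) assms(4) by auto
    define u where "u a = (if a \<in> s then r a else - r' a)" for a
    have "(\<Sum>a\<in>s \<union> t. u a *s a) = (\<Sum>a\<in>s. u a *s a) + (\<Sum>a\<in>t. u a *s a)"
      by (rule sum.union_disjoint[OF s(2) t(2) disj])
    also have "(\<Sum>a\<in>s. u a *s a) = x" using s(1) by (auto simp: u_def intro!: sum.cong)
    also have "(\<Sum>a\<in>t. u a *s a) = - x" using t(1) disj
      by (auto simp: u_def sum_negf[symmetric] intro!: sum.cong)
    finally have sum0: "(\<Sum>a\<in>s \<union> t. u a *s a) = 0" by simp
    have "finite (s \<union> t)" "s \<union> t \<subseteq> U" using s(2,3) t(2,3) assms(2,3) by auto
    then have "u a = 0" if "a \<in> s" for a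
      using independentD[OF assms(1) _ _ sum0, of a] that by blast
    then show "x = 0" using s(1) by (simp add: u_def)
  qed
  then show ?thesis using span_zero by auto
qed

lemma independent_Un_of_span_Int:
  assumes "independent S" "independent T" "span S \<inter> span T = {0}"
  shows "independent (S \<union> T)"
  unfolding independent_explicit_module
proof (intro allI impI)
  fix t u v assume t: "finite t" "t \<subseteq> S \<union> T" "(\<Sum>v\<in>t. u v *s v) = 0" "v \<in> t"
  define t1 where "t1 = t \<inter> S"
  define t2 where "t2 = t - S"
  have fin: "finite t1" "finite t2" using t(1) by (auto simp: t1_def t2_def)
  have sub: "t1 \<subseteq> S" "t2 \<subseteq> T" using t(2) by (auto simp: t1_def t2_def)
  have "t = t1 \<union> t2" "t1 \<inter> t2 = {}" by (auto simp: t1_def t2_def)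
  then have "(\<Sum>v\<in>t1. u v *s v) + (\<Sum>v\<in>t2. u v *s v) = 0"
    using t(3) sum.union_disjoint[OF fin, of "\<lambda>v. u v *s v"] by simp
  then have eq: "(\<Sum>v\<in>t1. u v *s v) = - (\<Sum>v\<in>t2. u v *s v)" by (simp add: eq_neg_iff_add_eq_0)
  have "(\<Sum>v\<in>t1. u v *s v) \<in> span S"
    using sub by (intro span_sum span_scale) (auto intro: span_base)
  moreover have "- (\<Sum>v\<in>t2. u v *s v) \<in> span T"
    using sub by (intro span_neg span_sum span_scale) (auto intro: span_base)
  ultimately have z1: "(\<Sum>v\<in>t1. u v *s v) = 0" using assms(3) eq by (metis IntI singletonD)
  then have z2: "(\<Sum>v\<in>t2. u v *s v) = 0" using eq by simp
  show "u v = 0"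
  proof (cases "v \<in> S")
    case True
    then show ?thesis using independentD[OF assms(1) fin(1) sub(1) z1] t(4) by (simp add: t1_def)
  next
    case False
    then show ?thesis using independentD[OF assms(2) fin(2) sub(2) z2] t(4) by (simp add: t2_def)
  qed
qed

lemma quotient_basis_exists:
  assumes "subspace A" "subspace B" "B \<subseteq> A"
  obtains S where "quotient_basis scale S A B"
proof -
  obtain T where T: "T \<subseteq> B" "independent T" "B \<subseteq> span T"
    using maximal_independent_subset[of B] by blast
  obtain U where U: "T \<subseteq> U" "U \<subseteq> A" "independent U" "A \<subseteq> span U"
    using maximal_independent_subset_extend[of T A] T(1,2) assms(3) by blast
  have span_T: "span T = B" using span_subspace[OF T(1,3) assms(2)] .
  have span_U: "span U = A" using span_subspace[OF U(2,4) assms(1)] .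
  have "(U - T) \<union> T = U" using U(1) by blast
  then have "ssum (span (U - T)) B = A" using span_Un_ssum[of "U - T" T] span_T span_U by simp
  moreover have "span (U - T) \<inter> B = {0}"
    using span_Int_of_disjoint[OF U(3) Diff_subset U(1)] span_T by auto
  moreover have "independent (U - T)" using independent_mono[OF U(3)] by blast
  ultimately show ?thesis using that quotient_basisI by blast
qed

text \<open>Moving the vectors of a quotient basis along B is how two quotient bases are compared.\<close>
lemma independent_image_mod_subspace:
  assumes B: "subspace B" and T: "independent T" "span T \<inter> B = {0}"
    and g: "\<And>t. t \<in> T \<Longrightarrow> t - g t \<in> B"
  shows "inj_on g T" "independent (g ` T)"
proof -
  show inj: "inj_on g T"
  proof (rule inj_onI)
    fix t t' assume t: "t \<in> T" "t' \<in> T" "g t = g t'"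
    have "t - t' = (t - g t) - (t' - g t')" using t(3) by simp
    then have "t - t' \<in> B" using g[OF t(1)] g[OF t(2)] B subspace_diff by metis
    moreover have "t - t' \<in> span T" using t by (simp add: span_base span_diff)
    ultimately have "t - t' = 0" using T(2) by blast
    then show "t = t'" by simp
  qed
  show "independent (g ` T)"
    unfolding independent_explicit_module
  proof (intro allI impI)
    fix F u v assume F: "finite F" "F \<subseteq> g ` T" "(\<Sum>v\<in>F. u v *s v) = 0" "v \<in> F"
    define F' where "F' = T \<inter> g -` F"
    have F': "F' \<subseteq> T" "g ` F' = F" "inj_on g F'"
      using F(2) inj_on_subset[OF inj] by (auto simp: F'_def)
    then have fin: "finite F'" using F(1) finite_imageD by blast
    have "(\<Sum>t\<in>F'. u (g t) *s g t) = 0"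
      using F(3) sum.reindex[OF F'(3), of "\<lambda>v. u v *s v"] F'(2) by simp
    then have "(\<Sum>t\<in>F'. u (g t) *s t) = (\<Sum>t\<in>F'. u (g t) *s (t - g t))"
      by (simp add: scale_right_diff_distrib sum_subtractf)
    moreover have "(\<Sum>t\<in>F'. u (g t) *s (t - g t)) \<in> B"
      using F'(1) g B by (intro subspace_sum) (auto intro: subspace_scale)
    moreover have "(\<Sum>t\<in>F'. u (g t) *s t) \<in> span T"
      using F'(1) by (intro span_sum span_scale) (auto intro: span_base)
    ultimately have sum0: "(\<Sum>t\<in>F'. u (g t) *s t) = 0" using T(2) by auto
    obtain t where t: "t \<in> F'" "v = g t" using F(4) F'(2) by auto
    have "(\<lambda>t. u (g t)) t = 0" by (rule independentD[OF T(1) fin F'(1) sum0 t(1)])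
    then show "u v = 0" using t(2) by simp
  qed
qed

lemma quotient_basis_card_le:
  assumes S: "quotient_basis scale S A B" "finite S" and T: "quotient_basis scale T A B"
    and B: "subspace B"
  shows "finite T \<and> card T \<le> card S"
proof -
  have "\<exists>c. c \<in> span S \<and> t - c \<in> B" if "t \<in> T" for t
  proof -
    have "t \<in> ssum (span S) B"
      using that quotient_basis_subset[OF T] quotient_basisD(4)[OF S(1)] by auto
    then obtain c b where "c \<in> span S" "b \<in> B" "t = c + b" by (auto elim: ssumE)
    then show ?thesis by auto
  qed
  then obtain g where g: "\<And>t. t \<in> T \<Longrightarrow> g t \<in> span S" "\<And>t. t \<in> T \<Longrightarrow> t - g t \<in> B"
    by metis
  note moved = independent_image_mod_subspace[OF B quotient_basisD(1,3)[OF T] g(2)]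
  have "g ` T \<subseteq> span S" using g(1) by blast
  from independent_span_bound[OF S(2) moved(2) this]
  have "finite (g ` T) \<and> card (g ` T) \<le> card S" .
  then show ?thesis using moved(1) by (simp add: card_image finite_image_iff)
qed

lemma has_qdim_qd:
  assumes "has_qdim scale A B k" "subspace B"
  shows "qd scale (A, B) = k"
proof -
  obtain S where S: "quotient_basis scale S A B" "finite S" "card S = k"
    using assms(1) by (auto simp: has_qdim_def)
  define C where "C = (SOME C. is_compl scale A B C)"
  have "is_compl scale A B (span S)" using S(1) by (simp add: quotient_basis_def)
  then have "is_compl scale A B C" unfolding C_def by (rule someI)
  then obtain T where T: "quotient_basis scale T A B" "span T = C"
    by (rule is_compl_obtain_quotient_basis)
  have "finite T" "card T = k"
    using quotient_basis_card_le[OF S(1,2) T(1) assms(2)]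
      quotient_basis_card_le[OF T(1) _ S(1) assms(2)] S(3) by auto
  moreover have "dim C = card T"
    using dim_span_eq_card_independent[OF quotient_basisD(1)[OF T(1)]] T(2) by simp
  ultimately show ?thesis by (simp add: qd_def qdim_def C_def)
qed

lemma quotient_basis_qf: "quotient_basis scale S A B \<Longrightarrow> finite S \<Longrightarrow> qf scale (A, B)"
  unfolding quotient_basis_def qf_def qfin_def by auto

lemma has_qdim_qf: "has_qdim scale A B k \<Longrightarrow> qf scale (A, B)"
  unfolding has_qdim_def using quotient_basis_qf by blast

lemma qf_has_qdim:
  assumes "qf scale (A, B)" "subspace B"
  shows "has_qdim scale A B (qd scale (A, B))"
proof -
  obtain C R where C: "is_compl scale A B C" "finite R" "span R = C"
    using assms(1) by (auto simp: qf_def qfin_def)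
  obtain T where T: "quotient_basis scale T A B" "span T = C"
    using C(1) by (rule is_compl_obtain_quotient_basis)
  have "T \<subseteq> span R" using span_superset[of T] T(2) C(3) by simp
  then have "finite T" using independent_span_bound[OF C(2) quotient_basisD(1)[OF T(1)]] by simp
  then have "has_qdim scale A B (card T)" using T(1) by (auto simp: has_qdim_def)
  with has_qdim_qd[OF this assms(2)] show ?thesis by simp
qed

lemma quotient_basis_Un:
  assumes sub: "subspace A'" "subspace B" "B \<subseteq> A'" "A' \<subseteq> A"
    and S: "quotient_basis scale S A A'" and T: "quotient_basis scale T A' B"
  shows "quotient_basis scale (S \<union> T) A B" "S \<inter> T = {}"
proof -
  note S' = quotient_basisD[OF S] and T' = quotient_basisD[OF T]
  have span_ST: "span (S \<union> T) = ssum (span S) (span T)" by (rule span_Un_ssum)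
  have ST: "span S \<inter> span T = {0}" using S'(3) T'(2) span_zero by blast
  have "span (S \<union> T) \<inter> B \<subseteq> {0}"
  proof
    fix x assume "x \<in> span (S \<union> T) \<inter> B"
    then obtain s t where x: "s \<in> span S" "t \<in> span T" "x = s + t" "x \<in> B"
      unfolding span_ST by (auto elim: ssumE)
    have "s = x - t" using x(3) by simp
    moreover have "x - t \<in> A'" using x(2,4) T'(2) sub(1,3) subspace_diff by blast
    ultimately have "s = 0" using S'(3) x(1) by blast
    then have "x \<in> span T \<inter> B" using x by simp
    then show "x \<in> {0}" using T'(3) by blast
  qed
  then have "span (S \<union> T) \<inter> B = {0}" using span_zero subspace_0[OF sub(2)] by blast
  moreover have "ssum (span (S \<union> T)) B = A" using S'(4) T'(4) by (simp add: span_ST ssum_assoc)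
  ultimately show "quotient_basis scale (S \<union> T) A B"
    using quotient_basisI independent_Un_of_span_Int[OF S'(1) T'(1) ST] by blast
  have "S \<inter> T \<subseteq> {0}" using ST span_superset[of S] span_superset[of T] by blast
  moreover have "0 \<notin> S" using S'(1) dependent_zero by blast
  ultimately show "S \<inter> T = {}" by blast
qed

lemma has_qdim_tower:
  assumes sub: "subspace A" "subspace A'" "subspace B" "B \<subseteq> A'" "A' \<subseteq> A"
    and "has_qdim scale A B k"
  obtains k1 k2 where "has_qdim scale A A' k1" "has_qdim scale A' B k2" "k = k1 + k2"
proof -
  obtain U where U: "quotient_basis scale U A B" "finite U" "card U = k"
    using assms(6) by (auto simp: has_qdim_def)
  obtain S where S: "quotient_basis scale S A A'" using quotient_basis_exists[OF sub(1,2,5)] .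
  obtain T where T: "quotient_basis scale T A' B" using quotient_basis_exists[OF sub(2,3,4)] .
  note ST = quotient_basis_Un[OF sub(2-5) S T]
  have "finite (S \<union> T)" "card (S \<union> T) \<le> card U"
    using quotient_basis_card_le[OF U(1,2) ST(1) sub(3)] by auto
  moreover have "card U \<le> card (S \<union> T)"
    using quotient_basis_card_le[OF ST(1) _ U(1) sub(3)] calculation(1) by blast
  ultimately have "finite S" "finite T" "k = card S + card T"
    using U(3) card_Un_disjoint[OF _ _ ST(2)] by auto
  then show ?thesis using that S T by (auto simp: has_qdim_def)
qed

lemma
  assumes "subspace A" "subspace A'" "subspace B" "B \<subseteq> A'" "A' \<subseteq> A" "qf scale (A, B)"
  shows qd_tower: "qd scale (A, B) = qd scale (A, A') + qd scale (A', B)"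
    and qf_tower_upper: "qf scale (A, A')"
    and qf_tower_lower: "qf scale (A', B)"
proof -
  obtain k1 k2 where k: "has_qdim scale A A' k1" "has_qdim scale A' B k2"
    "qd scale (A, B) = k1 + k2"
    using has_qdim_tower[OF assms(1-5) qf_has_qdim[OF assms(6,3)]] by blast
  show "qd scale (A, B) = qd scale (A, A') + qd scale (A', B)"
    using k has_qdim_qd assms(2,3) by simp
  show "qf scale (A, A')" "qf scale (A', B)" using k(1,2) by (auto intro: has_qdim_qf)
qed

lemma quotient_basis_finite:
  assumes "qf scale (A, B)" "subspace B" "quotient_basis scale S A B"
  shows "finite S"
proof -
  obtain T where "quotient_basis scale T A B" "finite T"
    using qf_has_qdim[OF assms(1,2)] by (auto simp: has_qdim_def)
  then show ?thesis using quotient_basis_card_le[OF _ _ assms(3,2)] by blast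
qed

lemma quotient_basis_ssum_Int:
  assumes X: "subspace X" and Y: "subspace Y" and S: "quotient_basis scale S X (X \<inter> Y)"
  shows "quotient_basis scale S (ssum X Y) Y"
proof -
  note S' = quotient_basisD[OF S]
  have "span S \<inter> Y = {0}" using S'(2,3) by blast
  moreover have "ssum (span S) Y = ssum X Y"
  proof -
    have "ssum (span S) Y = ssum (span S) (ssum (X \<inter> Y) Y)"
      using ssum_absorb[OF Y subspace_inter[OF X Y]] by (simp add: ssum_commute)
    also have "\<dots> = ssum X Y" using S'(4) by (simp add: ssum_assoc[symmetric])
    finally show ?thesis .
  qed
  ultimately show ?thesis using quotient_basisI S'(1) by blast
qed

lemma qf_ssum_Int_iff:
  assumes X: "subspace X" and Y: "subspace Y"
  shows "qf scale (ssum X Y, Y) \<longleftrightarrow> qf scale (X, X \<inter> Y)"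
proof -
  have XY: "subspace (X \<inter> Y)" using X Y by (rule subspace_inter)
  obtain S where S: "quotient_basis scale S X (X \<inter> Y)"
    using quotient_basis_exists[OF X XY] by blast
  note S_sum = quotient_basis_ssum_Int[OF X Y S]
  show ?thesis
  proof
    assume "qf scale (ssum X Y, Y)"
    then have "finite S" using quotient_basis_finite[OF _ Y S_sum] by blast
    then show "qf scale (X, X \<inter> Y)" by (rule quotient_basis_qf[OF S])
  next
    assume "qf scale (X, X \<inter> Y)"
    then have "finite S" using quotient_basis_finite[OF _ XY S] by blast
    then show "qf scale (ssum X Y, Y)" by (rule quotient_basis_qf[OF S_sum])
  qed
qed

lemma qd_ssum_Int:
  assumes X: "subspace X" and Y: "subspace Y" and fin: "qf scale (X, X \<inter> Y)"
  shows "qd scale (ssum X Y, Y) = qd scale (X, X \<inter> Y)"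
proof -
  have XY: "subspace (X \<inter> Y)" using X Y by (rule subspace_inter)
  obtain S where S: "quotient_basis scale S X (X \<inter> Y)" "finite S"
    using qf_has_qdim[OF fin XY] by (auto simp: has_qdim_def)
  then have "has_qdim scale X (X \<inter> Y) (card S)"
    and "has_qdim scale (ssum X Y) Y (card S)"
    using quotient_basis_ssum_Int[OF X Y S(1)] by (auto simp: has_qdim_def)
  then show ?thesis using has_qdim_qd Y XY by simp
qed

text \<open>With M = I + (K \<inter> L), the modular law gives K/M \<cong> (K + L)/(I + L) and the second
  isomorphism theorem gives M/I \<cong> (K \<inter> L)/(I \<inter> L).\<close>
lemma qd_split_ssum_Int:
  assumes K: "subspace K" and I: "subspace I" and L: "subspace L"
    and IK: "I \<subseteq> K" and fin: "qf scale (K, I)"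
  shows "qd scale (K, I) = qd scale (ssum K L, ssum I L) + qd scale (K \<inter> L, I \<inter> L)"
proof -
  define M where "M = ssum I (K \<inter> L)"
  have KL: "subspace (K \<inter> L)" and IL: "subspace (ssum I L)"
    using subspace_inter[OF K L] subspace_ssum[OF I L] .
  have M: "subspace M" "I \<subseteq> M" "M \<subseteq> K"
    unfolding M_def using subspace_ssum[OF I KL] ssum_upper_left[OF KL] ssum_least[OF K IK]
    by auto
  have split: "qd scale (K, I) = qd scale (K, M) + qd scale (M, I)"
    and fin_KM: "qf scale (K, M)" and fin_MI: "qf scale (M, I)"
    using qd_tower qf_tower_upper qf_tower_lower K M I fin by blast+
  have "K \<inter> ssum I L = M" unfolding M_def by (rule Int_ssum_modular[OF K I IK])
  moreover have "ssum K (ssum I L) = ssum K L"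
    using ssum_absorb[OF K I IK] by (simp add: ssum_assoc[symmetric])
  ultimately have KM: "qd scale (K, M) = qd scale (ssum K L, ssum I L)"
    using qd_ssum_Int[OF K IL] fin_KM by simp
  have "ssum (K \<inter> L) I = M" "K \<inter> L \<inter> I = I \<inter> L"
    unfolding M_def using IK by (auto simp: ssum_commute)
  then have MI: "qd scale (M, I) = qd scale (K \<inter> L, I \<inter> L)"
    using qd_ssum_Int[OF KL I] qf_ssum_Int_iff[OF KL I] fin_MI by simp
  show ?thesis using split KM MI by simp
qed

end

text \<open>K1, K2, K12 play the roles of ker \<partial>, ker \<partial>bar, ker \<partial>\<partial>bar and I1, I2, I12 those of
  im \<partial>, im \<partial>bar, im \<partial>\<partial>bar; h_Aeppli is h_{\<partial>+\<partial>bar}, and dim_X is the dimension of X^{p,q}.\<close>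
locale kernel_image_diagram =
  complex_vector_space scale for scale :: "complex \<Rightarrow> 'v::ab_group_add \<Rightarrow> 'v" +
  fixes K1 K2 K12 I1 I2 I12 :: "'v set"
  assumes subspace_K1: "subspace K1" and subspace_K2: "subspace K2"
    and subspace_K12: "subspace K12" and subspace_I1: "subspace I1"
    and subspace_I2: "subspace I2" and subspace_I12: "subspace I12"
    and I12_I1: "I12 \<subseteq> I1" and I12_I2: "I12 \<subseteq> I2"
    and I1_K1: "I1 \<subseteq> K1" and I2_K2: "I2 \<subseteq> K2"
    and K1_K12: "K1 \<subseteq> K12" and K2_K12: "K2 \<subseteq> K12"
    and qf_d: "qf scale (K1, I1)" and qf_db: "qf scale (K2, I2)"
    and qf_BC: "qf scale (K1 \<inter> K2, I12)" and qf_Aeppli: "qf scale (K12, ssum I1 I2)"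
begin

abbreviation "h_d \<equiv> qd scale (K1, I1)"
abbreviation "h_db \<equiv> qd scale (K2, I2)"
abbreviation "h_BC \<equiv> qd scale (K1 \<inter> K2, I12)"
abbreviation "h_Aeppli \<equiv> qd scale (K12, ssum I1 I2)"
abbreviation "dim_A \<equiv> qd scale (I1 \<inter> I2, I12)"
abbreviation "dim_B \<equiv> qd scale (I1 \<inter> K2, I12)"
abbreviation "dim_C \<equiv> qd scale (K12, ssum I1 K2)"
abbreviation "dim_D \<equiv> qd scale (K1 \<inter> I2, I12)"
abbreviation "dim_E \<equiv> qd scale (K12, ssum K1 I2)"
abbreviation "dim_F \<equiv> qd scale (K12, ssum K1 K2)"
abbreviation "dim_Bt \<equiv> qd scale (I1 \<inter> K2, I1 \<inter> I2)"
abbreviation "dim_Dt \<equiv> qd scale (K1 \<inter> I2, I1 \<inter> I2)"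
abbreviation "dim_Ct \<equiv> qd scale (ssum K1 K2, ssum I1 K2)"
abbreviation "dim_Et \<equiv> qd scale (ssum K1 K2, ssum K1 I2)"

lemmas subspaces = subspace_K1 subspace_K2 subspace_K12 subspace_I1 subspace_I2 subspace_I12
  subspace_inter subspace_ssum

lemma kernel_image_diagram_swap: "kernel_image_diagram scale K2 K1 K12 I2 I1 I12"
  using complex_vector_space_axioms subspaces I12_I1 I12_I2 I1_K1 I2_K2 K1_K12 K2_K12
    qf_d qf_db qf_BC qf_Aeppli
  by (simp add: kernel_image_diagram_def kernel_image_diagram_axioms_def Int_commute ssum_commute)

lemma BC_split: "h_BC = qd scale (K1 \<inter> K2, I1 \<inter> K2) + dim_B"
  and qf_B: "qf scale (I1 \<inter> K2, I12)"
proof -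
  have "I12 \<subseteq> I1 \<inter> K2" "I1 \<inter> K2 \<subseteq> K1 \<inter> K2" using I12_I1 I12_I2 I2_K2 I1_K1 by auto
  then show "h_BC = qd scale (K1 \<inter> K2, I1 \<inter> K2) + dim_B" "qf scale (I1 \<inter> K2, I12)"
    using qd_tower[of "K1 \<inter> K2" "I1 \<inter> K2" I12] qf_tower_lower[of "K1 \<inter> K2" "I1 \<inter> K2" I12]
      qf_BC by (simp_all add: subspaces)
qed

lemma Aeppli_split: "h_Aeppli = dim_C + qd scale (ssum I1 K2, ssum I1 I2)"
  and qf_C: "qf scale (K12, ssum I1 K2)"
proof -
  have "ssum I1 I2 \<subseteq> ssum I1 K2" "ssum I1 K2 \<subseteq> K12"
    using ssum_mono[OF order_refl I2_K2] ssum_least[OF subspace_K12] I1_K1 K1_K12 K2_K12 by blast+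
  then show "h_Aeppli = dim_C + qd scale (ssum I1 K2, ssum I1 I2)" "qf scale (K12, ssum I1 K2)"
    using qd_tower[of K12 "ssum I1 K2" "ssum I1 I2"] qf_tower_upper[of K12 "ssum I1 K2" "ssum I1 I2"]
      qf_Aeppli by (simp_all add: subspaces)
qed

lemma dim_B_split: "dim_B = dim_Bt + dim_A"
proof -
  have "I12 \<subseteq> I1 \<inter> I2" "I1 \<inter> I2 \<subseteq> I1 \<inter> K2" using I12_I1 I12_I2 I2_K2 by auto
  then show ?thesis using qd_tower[of "I1 \<inter> K2" "I1 \<inter> I2" I12] qf_B by (simp add: subspaces)
qed

lemma dim_C_split: "dim_C = dim_Ct + dim_F"
proof -
  have "ssum I1 K2 \<subseteq> ssum K1 K2" "ssum K1 K2 \<subseteq> K12"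
    using ssum_mono[OF I1_K1 order_refl] ssum_least[OF subspace_K12 K1_K12 K2_K12] by auto
  then show ?thesis
    using qd_tower[of K12 "ssum K1 K2" "ssum I1 K2"] qf_C by (simp add: subspaces add.commute)
qed

lemma dim_B_le_BC: "dim_B \<le> h_BC"
  using BC_split by simp

lemma dim_C_le_Aeppli: "dim_C \<le> h_Aeppli"
  using Aeppli_split by simp

lemma Aeppli_Bt: "h_Aeppli + dim_Bt = h_db + dim_C"
  using qd_split_ssum_Int[OF subspace_K2 subspace_I2 subspace_I1 I2_K2 qf_db] Aeppli_split
  by (simp add: Int_commute ssum_commute)

lemma BC_Ct: "h_BC + dim_Ct = h_d + dim_B"
  using qd_split_ssum_Int[OF subspace_K1 subspace_I1 subspace_K2 I1_K1 qf_d] BC_split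
  by simp

lemma h_db_le_Aeppli:
  assumes "I1 = {0}"
  shows "h_db \<le> h_Aeppli"
proof -
  have "h_Aeppli = qd scale (K12, K2) + h_db"
    using qd_tower[OF subspace_K12 subspace_K2 subspace_I2 I2_K2 K2_K12] qf_Aeppli assms by simp
  then show ?thesis by simp
qed

lemma h_BC_le_d:
  assumes "I1 = {0}"
  shows "h_BC \<le> h_d"
proof -
  have I12: "I12 = {0}" using I12_I1 subspace_0[OF subspace_I12] assms by blast
  have KK: "subspace (K1 \<inter> K2)" using subspace_inter[OF subspace_K1 subspace_K2] .
  have "{0} \<subseteq> K1 \<inter> K2" using subspace_0[OF KK] by blast
  from qd_tower[OF subspace_K1 KK subspace_single_0 this Int_lower1]
  have "h_d = qd scale (K1, K1 \<inter> K2) + h_BC" using qf_d assms I12 by simp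
  then show ?thesis by simp
qed

lemma h_d_le_BC:
  assumes "K2 = K12"
  shows "h_d \<le> h_BC"
proof -
  have "K1 \<inter> K2 = K1" using assms K1_K12 by blast
  then have "h_BC = h_d + qd scale (I1, I12)"
    using qd_tower[OF subspace_K1 subspace_I1 subspace_I12 I12_I1 I1_K1] qf_BC by simp
  then show ?thesis by simp
qed

lemma Aeppli_le_db:
  assumes "K2 = K12"
  shows "h_Aeppli \<le> h_db"
proof -
  have I: "subspace (ssum I1 I2)" using subspace_ssum[OF subspace_I1 subspace_I2] .
  have "I2 \<subseteq> ssum I1 I2" by (rule ssum_upper_right[OF subspace_I1])
  moreover have "ssum I1 I2 \<subseteq> K12"
    using I1_K1 K1_K12 I2_K2 K2_K12 by (intro ssum_least[OF subspace_K12]) auto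
  ultimately have "qd scale (K12, I2) = h_Aeppli + qd scale (ssum I1 I2, I2)"
    using qd_tower[OF subspace_K12 I subspace_I2] qf_db assms by simp
  then show ?thesis using assms by simp
qed

lemma dim_D_split: "dim_D = dim_Dt + dim_A"
  using kernel_image_diagram.dim_B_split[OF kernel_image_diagram_swap]
  by (simp add: Int_commute)

lemma dim_E_split: "dim_E = dim_Et + dim_F"
  using kernel_image_diagram.dim_C_split[OF kernel_image_diagram_swap]
  by (simp add: ssum_commute)

lemma dim_D_le_BC: "dim_D \<le> h_BC"
  using kernel_image_diagram.dim_B_le_BC[OF kernel_image_diagram_swap]
  by (simp add: Int_commute)

lemma dim_E_le_Aeppli: "dim_E \<le> h_Aeppli"
  using kernel_image_diagram.dim_C_le_Aeppli[OF kernel_image_diagram_swap]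
  by (simp add: ssum_commute)

lemma Aeppli_Dt: "h_Aeppli + dim_Dt = h_d + dim_E"
  using kernel_image_diagram.Aeppli_Bt[OF kernel_image_diagram_swap]
  by (simp add: Int_commute ssum_commute)

lemma BC_Et: "h_BC + dim_Et = h_db + dim_D"
  using kernel_image_diagram.BC_Ct[OF kernel_image_diagram_swap]
  by (simp add: Int_commute ssum_commute)

lemma Aeppli_BC: "h_Aeppli + h_BC = h_d + h_db + dim_A + dim_F"
  using Aeppli_Bt BC_Ct dim_B_split dim_C_split by linarith

lemma h_d_le_Aeppli: "I2 = {0} \<Longrightarrow> h_d \<le> h_Aeppli"
  using kernel_image_diagram.h_db_le_Aeppli[OF kernel_image_diagram_swap]
  by (simp add: ssum_commute)

lemma h_BC_le_db: "I2 = {0} \<Longrightarrow> h_BC \<le> h_db"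
  using kernel_image_diagram.h_BC_le_d[OF kernel_image_diagram_swap]
  by (simp add: Int_commute)

lemma h_db_le_BC: "K1 = K12 \<Longrightarrow> h_db \<le> h_BC"
  using kernel_image_diagram.h_d_le_BC[OF kernel_image_diagram_swap]
  by (simp add: Int_commute)

lemma Aeppli_le_d: "K1 = K12 \<Longrightarrow> h_Aeppli \<le> h_d"
  using kernel_image_diagram.Aeppli_le_db[OF kernel_image_diagram_swap]
  by (simp add: ssum_commute)

end

locale bounded_double_complex =
  fixes scale :: "complex \<Rightarrow> 'v::ab_group_add \<Rightarrow> 'v"
    and E :: "nat \<Rightarrow> nat \<Rightarrow> 'v set" and d db :: "'v \<Rightarrow> 'v" and n :: nat
  assumes bdcx: "bdcx scale E d db n"
begin

sublocale complex_vector_space scale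
  using bdcx by (simp add: bdcx_def complex_vector_space_def)

sublocale partial: Vector_Spaces.linear scale scale d
  using bdcx by (simp add: bdcx_def)

sublocale dbar: Vector_Spaces.linear scale scale db
  using bdcx by (simp add: bdcx_def)

lemma subspace_E: "subspace (E p q)"
  using bdcx by (simp add: bdcx_def)

lemma E_eq_zero_above: "n < p \<or> n < q \<Longrightarrow> E p q = {0}"
  using bdcx unfolding bdcx_def by blast

lemma
  assumes "x \<in> E p q"
  shows d_mem: "d x \<in> E (Suc p) q" and db_mem: "db x \<in> E p (Suc q)"
    and d_d: "d (d x) = 0" and db_db: "db (db x) = 0"
    and d_db_anticommute: "d (db x) = - db (d x)"
proof -
  have "d x \<in> E (Suc p) q \<and> db x \<in> E p (Suc q) \<and> d (d x) = 0 \<and> db (db x) = 0 \<and>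
      d (db x) + db (d x) = 0"
    using bdcx assms unfolding bdcx_def by blast
  then show "d x \<in> E (Suc p) q" "db x \<in> E p (Suc q)" "d (d x) = 0" "db (db x) = 0"
    "d (db x) = - db (d x)"
    by (simp_all add: eq_neg_iff_add_eq_0)
qed

lemma subspace_kerD: "subspace (kerD E d p q)"
  unfolding kerD_def using subspace_inter[OF subspace_E partial.subspace_kernel]
  by (simp add: Int_def)

lemma subspace_kerDb: "subspace (kerDb E db p q)"
  unfolding kerDb_def using subspace_inter[OF subspace_E dbar.subspace_kernel]
  by (simp add: Int_def)

lemma subspace_kerDDb: "subspace (kerDDb E d db p q)"
  unfolding kerDDb_def
  using subspace_inter[OF subspace_E dbar.subspace_vimage[OF partial.subspace_kernel]]
  by (simp add: Int_def vimage_def)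

lemma subspace_imD: "subspace (imD E d p q)"
  unfolding imD_def using partial.subspace_image[OF subspace_E] by simp

lemma subspace_imDb: "subspace (imDb E db p q)"
  unfolding imDb_def using dbar.subspace_image[OF subspace_E] by simp

lemma subspace_imDDb: "subspace (imDDb E d db p q)"
  unfolding imDDb_def using partial.subspace_image[OF dbar.subspace_image[OF subspace_E]]
  by (simp add: image_image)

lemma imD_subset_kerD: "imD E d p q \<subseteq> kerD E d p q"
  using d_d subspace_0[OF subspace_E] by (cases p) (auto simp: imD_def kerD_def d_mem)

lemma imDb_subset_kerDb: "imDb E db p q \<subseteq> kerDb E db p q"
  using db_db subspace_0[OF subspace_E] by (cases q) (auto simp: imDb_def kerDb_def db_mem)

lemma kerD_subset_kerDDb: "kerD E d p q \<subseteq> kerDDb E d db p q"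
  by (auto simp: kerD_def kerDDb_def d_db_anticommute)

lemma kerDb_subset_kerDDb: "kerDb E db p q \<subseteq> kerDDb E d db p q"
  by (auto simp: kerDb_def kerDDb_def)

lemma imDDb_subset_imD: "imDDb E d db p q \<subseteq> imD E d p q"
proof (cases "p = 0 \<or> q = 0")
  case True
  then show ?thesis using subspace_0[OF subspace_imD] by (auto simp: imDDb_def)
next
  case False
  have "db x \<in> E (p - 1) q" if "x \<in> E (p - 1) (q - 1)" for x
    using db_mem[OF that] False by (simp add: Suc_pred')
  then show ?thesis using False by (auto simp: imDDb_def imD_def)
qed

lemma imDDb_subset_imDb: "imDDb E d db p q \<subseteq> imDb E db p q"
proof (cases "p = 0 \<or> q = 0")
  case True
  then show ?thesis using subspace_0[OF subspace_imDb] by (auto simp: imDDb_def)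
next
  case False
  have "d (db x) \<in> db ` E p (q - 1)" if "x \<in> E (p - 1) (q - 1)" for x
  proof -
    have "- d x \<in> E p (q - 1)"
      using d_mem[OF that] False subspace_neg[OF subspace_E] by (simp add: Suc_pred')
    then show ?thesis using d_db_anticommute[OF that] dbar.neg by (metis image_eqI)
  qed
  then show ?thesis using False by (auto simp: imDDb_def imDb_def)
qed

lemma kerDb_eq_kerDDb:
  assumes "n \<le> q"
  shows "kerDb E db p q = kerDDb E d db p q"
proof -
  have "db x = 0" if "x \<in> E p q" for x
    using db_mem[OF that] E_eq_zero_above[of p "Suc q"] assms by auto
  then show ?thesis by (intro equalityI kerDb_subset_kerDDb) (auto simp: kerDb_def kerDDb_def)
qed

lemma kerD_eq_kerDDb:
  assumes "n \<le> p"
  shows "kerD E d p q = kerDDb E d db p q"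
proof -
  have "d x = 0" if "x \<in> E p q" for x
    using d_mem[OF that] E_eq_zero_above[of "Suc p" q] assms by auto
  then show ?thesis by (intro equalityI kerD_subset_kerDDb) (auto simp: kerD_def kerDDb_def)
qed

lemma kernel_image_diagram:
  assumes "all_fin scale E d db"
  shows "kernel_image_diagram scale (kerD E d p q) (kerDb E db p q) (kerDDb E d db p q)
    (imD E d p q) (imDb E db p q) (imDDb E d db p q)"
proof -
  have "qf scale (Q E d db p q)" if "Q \<in> {H_d, H_db, H_BC, H_A}" for Q
    using assms that unfolding all_fin_def by blast
  then have "qf scale (kerD E d p q, imD E d p q)" "qf scale (kerDb E db p q, imDb E db p q)"
    "qf scale (kerD E d p q \<inter> kerDb E db p q, imDDb E d db p q)"
    "qf scale (kerDDb E d db p q, ssum (imD E d p q) (imDb E db p q))"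
    unfolding H_d_def H_db_def H_BC_def H_A_def by blast+
  then show ?thesis
    by (intro kernel_image_diagram.intro complex_vector_space_axioms kernel_image_diagram_axioms.intro
        subspace_kerD subspace_kerDb subspace_kerDDb subspace_imD subspace_imDb subspace_imDDb
        imD_subset_kerD imDb_subset_kerDb kerD_subset_kerDDb kerDb_subset_kerDDb
        imDDb_subset_imD imDDb_subset_imDb)
qed

end

theorem lemma2p4:
  fixes scale :: "complex \<Rightarrow> 'v::ab_group_add \<Rightarrow> 'v"
    and E :: "nat \<Rightarrow> nat \<Rightarrow> 'v set" and d db :: "'v \<Rightarrow> 'v" and n p q :: nat
  assumes dc: "bdcx scale E d db n"
    and fin: "all_fin scale E d db"
    and pq: "p \<le> n" "q \<le> n"
  defines "h X \<equiv> qd scale (X E d db p q)"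
  shows
    "(h Bq = h Bt + h Aq \<and> h Dq = h Dt + h Aq \<and> h Cq = h Ct + h Fq \<and> h Eq = h Et + h Fq)
   \<and> (h Bq \<le> h H_BC \<and> h Dq \<le> h H_BC \<and> h Cq \<le> h H_A \<and> h Eq \<le> h H_A)
   \<and> (h H_A + h Bt = h H_db + h Cq \<and> h H_A + h Dt = h H_d + h Eq \<and> h H_BC + h Et = h H_db + h Dq \<and> h H_BC + h Ct = h H_d + h Bq)
   \<and> (h H_A + h H_BC = h H_d + h H_db + h Aq + h Fq)
   \<and> (p = 0 \<longrightarrow> h H_db \<le> h H_A \<and> h H_BC \<le> h H_d)
   \<and> (q = 0 \<longrightarrow> h H_BC \<le> h H_db \<and> h H_d \<le> h H_A)
   \<and> (q = n \<longrightarrow> h H_d \<le> h H_BC \<and> h H_A \<le> h H_db)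
   \<and> (p = n \<longrightarrow> h H_db \<le> h H_BC \<and> h H_A \<le> h H_d)"
proof -
  interpret bounded_double_complex scale E d db n using dc by unfold_locales
  interpret kernel_image_diagram scale "kerD E d p q" "kerDb E db p q" "kerDDb E d db p q"
    "imD E d p q" "imDb E db p q" "imDDb E d db p q"
    using fin by (rule kernel_image_diagram)
  have I1: "p = 0 \<Longrightarrow> imD E d p q = {0}" and I2: "q = 0 \<Longrightarrow> imDb E db p q = {0}"
    by (simp_all add: imD_def imDb_def)
  have K1: "p = n \<Longrightarrow> kerD E d p q = kerDDb E d db p q"
    and K2: "q = n \<Longrightarrow> kerDb E db p q = kerDDb E d db p q"
    by (simp_all add: kerD_eq_kerDDb kerDb_eq_kerDDb)
  show ?thesis
    unfolding h_def H_db_def H_d_def H_BC_def H_A_def Aq_def Bq_def Cq_def Dq_def Eq_def Fq_def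
      Bt_def Dt_def Ct_def Et_def
    using dim_B_split dim_D_split dim_C_split dim_E_split
      dim_B_le_BC dim_D_le_BC dim_C_le_Aeppli dim_E_le_Aeppli
      Aeppli_Bt Aeppli_Dt BC_Et BC_Ct Aeppli_BC
      h_db_le_Aeppli[OF I1] h_BC_le_d[OF I1] h_BC_le_db[OF I2] h_d_le_Aeppli[OF I2]
      h_d_le_BC[OF K2] Aeppli_le_db[OF K2] h_db_le_BC[OF K1] Aeppli_le_d[OF K1]
    by blast
qed

end
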